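(* Let $p,q\in(0,1/2)$ with $\frac{\log p}{\log q}\notin\mathbb Q$. Then the topological (Kuratowski) limit $\lim_{t\to+\infty}tK_{pq}$ exists and equals $[0,+\infty)$, where $tK_{pq}=\{tx:x\in K_{pq}\}$.
   Context: For $p,q\in(0,1/2)$ let $S_1(x)=px$, $S_2(x)=qx$, $S_3(x)=px+1-p$, $S_4(x)=qx+1-q$, and let $K_{pq}$ be the attractor of $\{S_1,S_2,S_3,S_4\}$, i.e. the unique nonempty compact $K\subset\mathbb R$ with $K=\bigcup_{i=1}^4S_i(K)$. *)

theory Defs
  imports "HOL-Analysis.Analysis"
begin

definition attractor_pq :: "real \<Rightarrow> real \<Rightarrow> real set" where
  "attractor_pq p q = (THE K. K \<noteq> {} \<and> compact K \<and>
      K = (\<lambda>x. p * x) ` K \<union> (\<lambda>x. q * x) ` K \<union> (\<lambda>x. p * x + 1 - p) ` K \<union> (\<lambda>x. q * x + 1 - q) ` K)"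

definition kuratowski_liminf :: "('i \<Rightarrow> 'a::metric_space set) \<Rightarrow> 'i filter \<Rightarrow> 'a set" where
  "kuratowski_liminf A F = {x. \<forall>e>0. eventually (\<lambda>t. \<exists>y\<in>A t. dist x y < e) F}"

definition kuratowski_limsup :: "('i \<Rightarrow> 'a::metric_space set) \<Rightarrow> 'i filter \<Rightarrow> 'a set" where
  "kuratowski_limsup A F = {x. \<forall>e>0. frequently (\<lambda>t. \<exists>y\<in>A t. dist x y < e) F}"

definition kuratowski_limit_is :: "('i \<Rightarrow> 'a::metric_space set) \<Rightarrow> 'i filter \<Rightarrow> 'a set \<Rightarrow> bool" where
  "kuratowski_limit_is A F L \<longleftrightarrow> kuratowski_liminf A F = L \<and> kuratowski_limsup A F = L"

end

theory Submission
  imports Defs "HOL-Real_Asymp.Real_Asymp"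
begin

(* The attractor K is the closure of the orbit of 0, the fixed point of S1, under S1, ..., S4
   (the maps contract, so the invariant compact set is unique); hence K lies in [0,1] and contains
   0 and c p^m q^n for c = 1 - p and all m, n. Since ln p / ln q is irrational, the sums
   m (-ln p) + n (-ln q) become delta-dense in every half-line [S, oo) (Dirichlet approximation
   produces a tiny positive combination, and adding copies of it bridges the gaps between
   multiples of -ln q). Taking logarithms, every x > 0 is within e of t c p^m q^n for some m, n
   once t is large; hence [0, oo) is contained in the lower limit of t K, while t K stays inside
   the closed set [0, oo). *)

(* The point of K farthest from L is the image of a point of K, which is at least as far from L,
   so contraction forces that largest distance to vanish. *)
lemma contracting_ifs_invariant_subset:
  fixes F :: "('a::heine_borel \<Rightarrow> 'a) set" and c :: real
  assumes c: "0 \<le> c" "c < 1"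
    and lipschitz: "\<And>f x y. f \<in> F \<Longrightarrow> dist (f x) (f y) \<le> c * dist x y"
    and K: "compact K" "K \<subseteq> (\<Union>f\<in>F. f ` K)"
    and L: "compact L" "L \<noteq> {}" "(\<Union>f\<in>F. f ` L) \<subseteq> L"
  shows "K \<subseteq> L"
proof (cases "K = {}")
  case False
  have "continuous_on K (\<lambda>x. infdist x L)"
    by (intro continuous_intros)
  then obtain x where x: "x \<in> K" and x_max: "\<And>y. y \<in> K \<Longrightarrow> infdist y L \<le> infdist x L"
    using continuous_attains_sup[OF K(1) False] by blast
  obtain f y where f: "f \<in> F" and y: "y \<in> K" and "x = f y"
    using x K(2) by blast
  obtain z where z: "z \<in> L" and "infdist y L = dist y z"
    using infdist_attains_inf[OF compact_imp_closed[OF L(1)] L(2)] by metis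
  moreover have "f z \<in> L"
    using f z L(3) by blast
  ultimately have "infdist x L \<le> c * infdist y L"
    using \<open>x = f y\<close> lipschitz[OF f] infdist_le order_trans by metis
  also have "\<dots> \<le> c * infdist x L"
    using x_max[OF y] c by (simp add: mult_left_mono)
  finally have "infdist x L = 0"
    using c infdist_nonneg[of x L] by (simp add: mult_le_cancel_right1)
  then have "infdist y L = 0" if "y \<in> K" for y
    using x_max[OF that] infdist_nonneg[of y L] by simp
  then show ?thesis
    using in_closed_iff_infdist_zero[OF compact_imp_closed[OF L(1)] L(2)] by blast
qed simp

lemma the_contracting_ifs_invariant_compact:
  fixes F :: "('a::heine_borel \<Rightarrow> 'a) set" and c :: real
  assumes c: "0 \<le> c" "c < 1"
    and lipschitz: "\<And>f x y. f \<in> F \<Longrightarrow> dist (f x) (f y) \<le> c * dist x y"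
    and K: "K \<noteq> {}" "compact K" "(\<Union>f\<in>F. f ` K) = K"
  shows "(THE K'. K' \<noteq> {} \<and> compact K' \<and> K' = (\<Union>f\<in>F. f ` K')) = K"
proof (rule the_equality)
  show "K \<noteq> {} \<and> compact K \<and> K = (\<Union>f\<in>F. f ` K)"
    using K by argo
next
  fix K' assume K': "K' \<noteq> {} \<and> compact K' \<and> K' = (\<Union>f\<in>F. f ` K')"
  have "K' \<subseteq> K"
    by (rule contracting_ifs_invariant_subset[OF c lipschitz]) (use K K' in blast)+
  moreover have "K \<subseteq> K'"
    by (rule contracting_ifs_invariant_subset[OF c lipschitz]) (use K K' in blast)+
  ultimately show "K' = K"
    by (rule subset_antisym)
qed

inductive_set ifs_orbit :: "('a \<Rightarrow> 'a) set \<Rightarrow> 'a \<Rightarrow> 'a set" for F x\<^sub>0 where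
  base: "x\<^sub>0 \<in> ifs_orbit F x\<^sub>0"
| step: "f \<in> F \<Longrightarrow> x \<in> ifs_orbit F x\<^sub>0 \<Longrightarrow> f x \<in> ifs_orbit F x\<^sub>0"

lemma ifs_orbit_subset:
  assumes "x\<^sub>0 \<in> C" "\<And>f. f \<in> F \<Longrightarrow> f ` C \<subseteq> C"
  shows "ifs_orbit F x\<^sub>0 \<subseteq> C"
proof
  show "x \<in> C" if "x \<in> ifs_orbit F x\<^sub>0" for x
    using that by induction (use assms in auto)
qed

lemma compact_invariant_closure_ifs_orbit:
  fixes F :: "('a::heine_borel \<Rightarrow> 'a) set"
  assumes "finite F" and cont: "\<And>f. f \<in> F \<Longrightarrow> continuous_on UNIV f"
    and fixpoint: "f\<^sub>0 \<in> F" "f\<^sub>0 x\<^sub>0 = x\<^sub>0" and bounded: "bounded (ifs_orbit F x\<^sub>0)"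
  defines "K \<equiv> closure (ifs_orbit F x\<^sub>0)"
  shows "compact K" "(\<Union>f\<in>F. f ` K) = K"
proof -
  show "compact K"
    using bounded by (simp add: K_def compact_closure)
  then have "compact (\<Union>f\<in>F. f ` K)"
    using \<open>finite F\<close> cont by (auto intro: compact_UN compact_continuous_image continuous_on_subset)
  moreover have "ifs_orbit F x\<^sub>0 \<subseteq> (\<Union>f\<in>F. f ` K)"
  proof
    have orbit_in_K: "ifs_orbit F x\<^sub>0 \<subseteq> K"
      unfolding K_def by (rule closure_subset)
    fix x assume "x \<in> ifs_orbit F x\<^sub>0"
    then show "x \<in> (\<Union>f\<in>F. f ` K)"
    proof cases
      case base
      then show ?thesis
        using fixpoint orbit_in_K ifs_orbit.base by (metis UN_iff image_eqI subsetD)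
    next
      case (step f y)
      then show ?thesis
        using orbit_in_K by blast
    qed
  qed
  ultimately have "K \<subseteq> (\<Union>f\<in>F. f ` K)"
    unfolding K_def by (simp add: closure_minimal compact_imp_closed)
  moreover have "f ` K \<subseteq> K" if "f \<in> F" for f
    unfolding K_def using that cont
    by (intro image_closure_subset) (auto intro: ifs_orbit.step continuous_on_subset closure_subset[THEN subsetD])
  ultimately show "(\<Union>f\<in>F. f ` K) = K"
    by blast
qed

lemma ifs_orbit_scale_power:
  fixes r :: "'a::monoid_mult"
  assumes "(\<lambda>x. r * x) \<in> F" "x \<in> ifs_orbit F x\<^sub>0"
  shows "r ^ n * x \<in> ifs_orbit F x\<^sub>0"
  by (induction n) (use assms in \<open>auto simp: mult.assoc dest: ifs_orbit.step\<close>)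

definition pq_maps :: "real \<Rightarrow> real \<Rightarrow> (real \<Rightarrow> real) set" where
  "pq_maps p q = {\<lambda>x. p * x, \<lambda>x. q * x, \<lambda>x. p * x + 1 - p, \<lambda>x. q * x + 1 - q}"

lemma pq_maps_image_Union:
  "(\<Union>f\<in>pq_maps p q. f ` K) =
     (\<lambda>x. p * x) ` K \<union> (\<lambda>x. q * x) ` K \<union> (\<lambda>x. p * x + 1 - p) ` K \<union> (\<lambda>x. q * x + 1 - q) ` K"
  by (auto simp: pq_maps_def)

lemma dist_affine_real: "0 \<le> r \<Longrightarrow> dist (r * x + b) (r * y + b) = r * dist x y" for r b x y :: real
  by (simp add: dist_real_def abs_mult flip: right_diff_distrib)

lemma dist_pq_maps_le:
  assumes "0 < p" "0 < q" "f \<in> pq_maps p q"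
  shows "dist (f x) (f y) \<le> max p q * dist x y"
proof -
  have "f = (\<lambda>x. p * x + 0) \<or> f = (\<lambda>x. q * x + 0) \<or>
        f = (\<lambda>x. p * x + (1 - p)) \<or> f = (\<lambda>x. q * x + (1 - q))"
    using assms(3) unfolding pq_maps_def by (auto simp: fun_eq_iff)
  then obtain r b where "f = (\<lambda>x. r * x + b)" "r = p \<or> r = q"
    by blast
  then have "dist (f x) (f y) = r * dist x y"
    using assms(1,2) dist_affine_real[of r] by auto
  also have "\<dots> \<le> max p q * dist x y"
    using \<open>r = p \<or> r = q\<close> by (auto intro: mult_right_mono)
  finally show ?thesis .
qed

lemma pq_maps_unit_interval:
  assumes "0 < p" "p < 1" "0 < q" "q < 1" "f \<in> pq_maps p q" "x \<in> {0..1}"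
  shows "f x \<in> {0..1}"
proof -
  have "r * x \<in> {0..1}" "r * x + 1 - r \<in> {0..1}" if "0 < r" "r < 1" for r :: real
  proof -
    have "0 \<le> r * x" "r * x \<le> r"
      using that assms(6) mult_left_le[of x r] by auto
    then show "r * x \<in> {0..1}" "r * x + 1 - r \<in> {0..1}"
      using that by (smt (verit) atLeastAtMost_iff)+
  qed
  then show ?thesis
    using assms(1-5) unfolding pq_maps_def by auto
qed

lemma ifs_orbit_pq_unit_interval:
  assumes "0 < p" "p < 1" "0 < q" "q < 1"
  shows "ifs_orbit (pq_maps p q) 0 \<subseteq> {0..1}"
  by (rule ifs_orbit_subset) (use pq_maps_unit_interval[OF assms] in auto)

lemma attractor_pq_eq_closure_orbit:
  assumes p: "0 < p" "p < 1" and q: "0 < q" "q < 1"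
  shows "attractor_pq p q = closure (ifs_orbit (pq_maps p q) 0)"
proof -
  define K where "K = closure (ifs_orbit (pq_maps p q) 0)"
  have "bounded (ifs_orbit (pq_maps p q) 0)"
    by (rule bounded_subset[OF bounded_closed_interval ifs_orbit_pq_unit_interval[OF p q]])
  moreover have "finite (pq_maps p q)" "(\<lambda>x. p * x) \<in> pq_maps p q"
    by (simp_all add: pq_maps_def)
  moreover have "continuous_on UNIV f" if "f \<in> pq_maps p q" for f
    using that unfolding pq_maps_def by (auto intro!: continuous_intros)
  ultimately have K: "compact K" "(\<Union>f\<in>pq_maps p q. f ` K) = K"
    using compact_invariant_closure_ifs_orbit[of "pq_maps p q" "\<lambda>x. p * x" 0]
    unfolding K_def by simp_all
  have "K \<noteq> {}"
    unfolding K_def using ifs_orbit.base closure_subset by (metis empty_iff subsetD)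
  have "(THE K'. K' \<noteq> {} \<and> compact K' \<and> K' = (\<Union>f\<in>pq_maps p q. f ` K')) = K"
  proof (rule the_contracting_ifs_invariant_compact)
    show "0 \<le> max p q" "max p q < 1"
      using p q by auto
    show "dist (f x) (f y) \<le> max p q * dist x y" if "f \<in> pq_maps p q" for f x y
      using dist_pq_maps_le p q that by blast
  qed fact+
  then show ?thesis
    unfolding attractor_pq_def pq_maps_image_Union[symmetric] K_def .
qed

lemma attractor_pq_subset_unit_interval:
  assumes "0 < p" "p < 1" "0 < q" "q < 1"
  shows "attractor_pq p q \<subseteq> {0..1}"
  unfolding attractor_pq_eq_closure_orbit[OF assms]
  by (rule closure_minimal[OF ifs_orbit_pq_unit_interval[OF assms] closed_atLeastAtMost])

lemma zero_in_attractor_pq: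
  assumes "0 < p" "p < 1" "0 < q" "q < 1"
  shows "0 \<in> attractor_pq p q"
  unfolding attractor_pq_eq_closure_orbit[OF assms]
  by (rule closure_subset[THEN subsetD, OF ifs_orbit.base])

lemma power_products_in_attractor_pq:
  assumes "0 < p" "p < 1" "0 < q" "q < 1"
  shows "p ^ m * (q ^ n * (1 - p)) \<in> attractor_pq p q"
proof -
  have maps: "(\<lambda>x. p * x) \<in> pq_maps p q" "(\<lambda>x. q * x) \<in> pq_maps p q"
    "(\<lambda>x. p * x + 1 - p) \<in> pq_maps p q"
    by (simp_all add: pq_maps_def)
  have "1 - p \<in> ifs_orbit (pq_maps p q) 0"
    using ifs_orbit.step[OF maps(3) ifs_orbit.base, of 0] by simp
  then have "p ^ m * (q ^ n * (1 - p)) \<in> ifs_orbit (pq_maps p q) 0"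
    by (intro ifs_orbit_scale_power maps)
  then show ?thesis
    unfolding attractor_pq_eq_closure_orbit[OF assms] by (rule closure_subset[THEN subsetD])
qed

lemma nat_multiple_bracket:
  fixes y \<gamma> :: real
  assumes "0 \<le> y" "0 < \<gamma>"
  obtains n :: nat where "real n * \<gamma> \<le> y" "y < (real n + 1) * \<gamma>"
proof
  have "real (nat \<lfloor>y / \<gamma>\<rfloor>) = \<lfloor>y / \<gamma>\<rfloor>"
    using assms by simp
  then have "real (nat \<lfloor>y / \<gamma>\<rfloor>) \<le> y / \<gamma>" "y / \<gamma> < real (nat \<lfloor>y / \<gamma>\<rfloor>) + 1"
    by linarith+
  then show "real (nat \<lfloor>y / \<gamma>\<rfloor>) * \<gamma> \<le> y" "y < (real (nat \<lfloor>y / \<gamma>\<rfloor>) + 1) * \<gamma>"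
    using assms(2) by (simp_all add: field_simps)
qed

lemma small_nat_combination:
  fixes A B \<delta> :: real
  assumes A: "0 < A" and B: "0 < B" and irrational: "A / B \<notin> \<rat>" and \<delta>: "0 < \<delta>"
  obtains m n :: nat where "0 < \<bar>m * A - n * B\<bar>" "\<bar>m * A - n * B\<bar> < \<delta>"
proof -
  define r where "r = A / B"
  have r: "0 < r"
    using A B by (simp add: r_def)
  obtain N :: nat where N: "max (B / \<delta>) (1 / r) < N"
    using reals_Archimedean2 by blast
  then have "0 < N"
    using r by (metis less_max_iff_disj of_nat_0_less_iff order.strict_trans zero_less_divide_1_iff)
  then obtain h k where k: "0 < k" and approx: "\<bar>of_int k * r - of_int h\<bar> < 1 / N"
    using Dirichlet_approx by metis
  have "1 / N < r"
    using N r \<open>0 < N\<close> by (simp add: field_simps)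
  moreover have "r \<le> of_int k * r"
    using k r by simp
  ultimately have "0 < h"
    using approx by linarith
  have "of_int k * r - of_int h \<noteq> 0"
  proof
    assume "of_int k * r - of_int h = 0"
    then have "r = of_int h / of_int k"
      using k by (simp add: field_simps)
    then show False
      using irrational by (simp add: r_def)
  qed
  moreover have "real (nat k) * A - real (nat h) * B = B * (of_int k * r - of_int h)"
    using B k \<open>0 < h\<close> by (simp add: r_def field_simps)
  moreover have "B * \<bar>of_int k * r - of_int h\<bar> < \<delta>"
  proof -
    have "B * \<bar>of_int k * r - of_int h\<bar> < B * (1 / N)"
      using approx B by (intro mult_strict_left_mono)
    also have "\<dots> < \<delta>"
      using N \<delta> \<open>0 < N\<close> by (simp add: field_simps)
    finally show ?thesis .
  qed
  ultimately show ?thesis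
    using B by (intro that[of "nat k" "nat h"]) (simp_all add: abs_mult)
qed

text \<open>If \<open>0 < m\<^sub>0 A - n\<^sub>0 B = \<gamma> < \<delta>\<close>, every large \<open>s\<close> lies within \<open>\<gamma>\<close> of
  \<open>N B + j \<gamma> = j m\<^sub>0 A + (N - j n\<^sub>0) B\<close>: take \<open>N B\<close> just below \<open>s\<close>, then climb by steps \<open>\<gamma>\<close>;
  fewer than \<open>B / \<gamma>\<close> steps are needed, so \<open>N - j n\<^sub>0\<close> stays nonnegative.\<close>

lemma eventually_near_nat_combination_of_gap:
  fixes A B \<gamma> \<delta> :: real and m\<^sub>0 n\<^sub>0 :: nat
  assumes B: "0 < B" and \<gamma>: "0 < \<gamma>" "\<gamma> < \<delta>" "\<gamma> = m\<^sub>0 * A - n\<^sub>0 * B"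
  shows "eventually (\<lambda>s. \<exists>m n. \<bar>real m * A + real n * B - s\<bar> < \<delta>) at_top"
  unfolding eventually_at_top_linorder
proof (intro exI[of _ "(n\<^sub>0 * B / \<gamma> + 1) * B"] allI impI)
  fix s assume s: "(n\<^sub>0 * B / \<gamma> + 1) * B \<le> s"
  moreover have "0 \<le> (n\<^sub>0 * B / \<gamma> + 1) * B"
    using B \<gamma> by simp
  ultimately have "0 \<le> s"
    by linarith
  then obtain N :: nat where N: "N * B \<le> s" "s < (real N + 1) * B"
    using nat_multiple_bracket B by metis
  then obtain j :: nat where j: "j * \<gamma> \<le> s - N * B" "s - N * B < (real j + 1) * \<gamma>"
    using nat_multiple_bracket \<gamma>(1) by (metis diff_ge_0_iff_ge)
  have "j * \<gamma> < B"
    using j N by (simp add: algebra_simps)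
  then have "j * n\<^sub>0 \<le> n\<^sub>0 * B / \<gamma>"
    using \<gamma>(1) mult_right_mono[of "\<gamma> * j" B n\<^sub>0] by (simp add: field_simps)
  also have "\<dots> < N"
    using mult_right_less_imp_less[of "n\<^sub>0 * B / \<gamma> + 1" B "real N + 1"] s N(2) B by linarith
  finally have "j * n\<^sub>0 \<le> N"
    by (simp flip: of_nat_mult)
  then have "real (j * m\<^sub>0) * A + real (N - j * n\<^sub>0) * B = N * B + j * \<gamma>"
    by (simp add: \<gamma>(3) of_nat_diff algebra_simps)
  then show "\<exists>m n. \<bar>real m * A + real n * B - s\<bar> < \<delta>"
    using j \<gamma> by (intro exI[of _ "j * m\<^sub>0"] exI[of _ "N - j * n\<^sub>0"]) (simp add: algebra_simps)
qed

lemma eventually_near_nat_combination: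
  fixes A B \<delta> :: real
  assumes A: "0 < A" and B: "0 < B" and irrational: "A / B \<notin> \<rat>" and \<delta>: "0 < \<delta>"
  shows "eventually (\<lambda>s. \<exists>m n. \<bar>real m * A + real n * B - s\<bar> < \<delta>) at_top"
proof -
  obtain m\<^sub>0 n\<^sub>0 :: nat where gap: "0 < \<bar>m\<^sub>0 * A - n\<^sub>0 * B\<bar>" "\<bar>m\<^sub>0 * A - n\<^sub>0 * B\<bar> < \<delta>"
    using small_nat_combination[OF assms] .
  show ?thesis
  proof (cases "0 < m\<^sub>0 * A - n\<^sub>0 * B")
    case True
    then show ?thesis
      using gap by (intro eventually_near_nat_combination_of_gap[OF B, of "m\<^sub>0 * A - n\<^sub>0 * B"]) auto
  next
    case False
    then have "eventually (\<lambda>s. \<exists>m n. \<bar>real m * B + real n * A - s\<bar> < \<delta>) at_top"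
      using gap by (intro eventually_near_nat_combination_of_gap[OF A, of "n\<^sub>0 * B - m\<^sub>0 * A"]) auto
    then show ?thesis
      by eventually_elim (metis add.commute)
  qed
qed

lemma eventually_near_power_products:
  fixes p q c x e :: real
  assumes p: "0 < p" "p < 1" and q: "0 < q" "q < 1" and irrational: "ln p / ln q \<notin> \<rat>"
    and pos: "0 < c" "0 < x" "0 < e"
  shows "eventually (\<lambda>t. \<exists>m n. \<bar>t * (p ^ m * (q ^ n * c)) - x\<bar> < e) at_top"
proof -
  have "\<forall>\<epsilon>>0. \<exists>\<delta>>0. \<forall>d :: real. \<bar>d\<bar> < \<delta> \<longrightarrow> \<bar>exp d - 1\<bar> < \<epsilon>"
    using isCont_exp[of "0 :: real"] unfolding continuous_at_real_range by simp
  then obtain \<delta> where \<delta>: "0 < \<delta>" and exp_near_1: "\<And>d. \<bar>d\<bar> < \<delta> \<Longrightarrow> \<bar>exp d - 1\<bar> < e / x"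
    using pos by (auto dest: spec[of _ "e / x"])
  have "eventually (\<lambda>s. \<exists>m n. \<bar>real m * - ln p + real n * - ln q - s\<bar> < \<delta>) at_top"
    using p q irrational \<delta> by (intro eventually_near_nat_combination) auto
  moreover have "filterlim (\<lambda>t. ln (t * c / x)) at_top at_top"
    using pos by real_asymp
  ultimately have "eventually (\<lambda>t. \<exists>m n. \<bar>real m * - ln p + real n * - ln q - ln (t * c / x)\<bar> < \<delta>) at_top"
    by (rule eventually_compose_filterlim)
  moreover have "eventually (\<lambda>t. 0 < (t :: real)) at_top"
    by (rule eventually_gt_at_top)
  ultimately show ?thesis
  proof eventually_elim
    case (elim t)
    then obtain m n :: nat where mn: "\<bar>real m * - ln p + real n * - ln q - ln (t * c / x)\<bar> < \<delta>"
      by blast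
    define d where "d = ln (t * c / x) + m * ln p + n * ln q"
    have "exp d = t * c / x * p ^ m * q ^ n"
      using elim pos p q by (simp add: d_def exp_add exp_of_nat_mult)
    then have "t * (p ^ m * (q ^ n * c)) - x = x * (exp d - 1)"
      using pos by (simp add: field_simps)
    then have "\<bar>t * (p ^ m * (q ^ n * c)) - x\<bar> = x * \<bar>exp d - 1\<bar>"
      using pos by (simp add: abs_mult)
    also have "\<dots> < x * (e / x)"
      using mn pos exp_near_1[of d] by (intro mult_strict_left_mono) (auto simp: d_def)
    finally show ?case
      using pos by auto
  qed
qed

lemma kuratowski_liminf_subset_limsup:
  assumes "F \<noteq> bot"
  shows "kuratowski_liminf A F \<subseteq> kuratowski_limsup A F"
  unfolding kuratowski_liminf_def kuratowski_limsup_def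
  using assms by (auto intro: eventually_frequently)

lemma kuratowski_limsup_subset_closed:
  assumes "closed C" and "eventually (\<lambda>t. A t \<subseteq> C) F"
  shows "kuratowski_limsup A F \<subseteq> C"
proof
  fix x assume x: "x \<in> kuratowski_limsup A F"
  show "x \<in> C"
  proof (rule ccontr)
    assume "x \<notin> C"
    then obtain e where "0 < e" and ball_outside: "ball x e \<subseteq> - C"
      using \<open>closed C\<close> open_contains_ball[of "- C"] by (auto simp: closed_def)
    have "frequently (\<lambda>t. \<exists>y\<in>A t. dist x y < e) F"
      using x \<open>0 < e\<close> by (simp add: kuratowski_limsup_def)
    moreover have "eventually (\<lambda>t. \<not> (\<exists>y\<in>A t. dist x y < e)) F"
      using assms(2) by eventually_elim (use ball_outside in auto)
    ultimately show False
      by (simp add: frequently_def)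
  qed
qed

lemma kuratowski_limit_isI:
  assumes "F \<noteq> bot" "L \<subseteq> kuratowski_liminf A F" "kuratowski_limsup A F \<subseteq> L"
  shows "kuratowski_limit_is A F L"
  using assms kuratowski_liminf_subset_limsup[OF assms(1), of A]
  unfolding kuratowski_limit_is_def by blast

lemma kuratowski_limsup_scaled_attractor_pq:
  assumes "0 < p" "p < 1" "0 < q" "q < 1"
  shows "kuratowski_limsup (\<lambda>t. (\<lambda>x. t * x) ` attractor_pq p q) at_top \<subseteq> {0..}"
proof (rule kuratowski_limsup_subset_closed[OF closed_atLeast])
  show "eventually (\<lambda>t. (\<lambda>x. t * x) ` attractor_pq p q \<subseteq> {0..}) at_top"
    using eventually_ge_at_top[of 0]
    by eventually_elim (use attractor_pq_subset_unit_interval[OF assms] in auto)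
qed

lemma kuratowski_liminf_scaled_attractor_pq:
  assumes p: "0 < p" "p < 1" and q: "0 < q" "q < 1" and irrational: "ln p / ln q \<notin> \<rat>"
  shows "{0..} \<subseteq> kuratowski_liminf (\<lambda>t. (\<lambda>x. t * x) ` attractor_pq p q) at_top"
proof (intro subsetI, unfold kuratowski_liminf_def, intro CollectI allI impI)
  fix x e :: real assume "x \<in> {0..}" "0 < e"
  show "eventually (\<lambda>t. \<exists>y\<in>(\<lambda>x. t * x) ` attractor_pq p q. dist x y < e) at_top"
  proof (cases "x = 0")
    case True
    have "\<exists>y\<in>(\<lambda>x. t * x) ` attractor_pq p q. dist x y < e" for t
      using zero_in_attractor_pq[OF p q] True \<open>0 < e\<close> by force
    then show ?thesis
      by simp
  next
    case False
    with \<open>x \<in> {0..}\<close> have "0 < x"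
      by simp
    then have "eventually (\<lambda>t. \<exists>m n. \<bar>t * (p ^ m * (q ^ n * (1 - p))) - x\<bar> < e) at_top"
      using p q irrational \<open>0 < e\<close> by (intro eventually_near_power_products) auto
    then show ?thesis
      by eventually_elim
        (use power_products_in_attractor_pq[OF p q] in \<open>force simp: dist_real_def abs_minus_commute\<close>)
  qed
qed

theorem theorem7:
  fixes p q :: real
  assumes "0 < p" "p < 1/2" "0 < q" "q < 1/2"
    and "ln p / ln q \<notin> \<rat>"
  shows "kuratowski_limit_is (\<lambda>t. (\<lambda>x. t * x) ` attractor_pq p q) at_top {0..}"
proof (rule kuratowski_limit_isI)
  have p: "0 < p" "p < 1" and q: "0 < q" "q < 1"
    using assms by auto
  show "{0..} \<subseteq> kuratowski_liminf (\<lambda>t. (\<lambda>x. t * x) ` attractor_pq p q) at_top"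
    using kuratowski_liminf_scaled_attractor_pq[OF p q assms(5)] .
  show "kuratowski_limsup (\<lambda>t. (\<lambda>x. t * x) ` attractor_pq p q) at_top \<subseteq> {0..}"
    using kuratowski_limsup_scaled_attractor_pq[OF p q] .
qed simp

end
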